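(* Let $n\ge3$, $\alpha<1$, $q\in[1,\infty)$, $r,s\in[0,1)$, and for $\beta\in[0,\pi]$ set $$\mathcal{J}(\alpha,\beta,q,r,s)=\int_{-\pi}^{\pi}\big(1+s^2-2rs\cos\theta\big)^{\frac{(n-\alpha)q}{2}-n+1}|\cos(\theta-\beta)|^q\,d\theta.$$ (1) If $q=\frac{2n-2}{n-\alpha}$ or $q=\frac{2n}{n-\alpha}$, then $\beta\mapsto\mathcal{J}(\alpha,\beta,q,r,s)$ is constant on $[0,\pi]$. (2) If $\frac{2n-2}{n-\alpha}<q<\frac{2n}{n-\alpha}$, then $\beta\mapsto\mathcal{J}(\alpha,\beta,q,r,s)$ is increasing on $[0,\frac\pi2]$ and $\max_{\beta\in[0,\pi]}\mathcal{J}(\alpha,\beta,q,r,s)=\mathcal{J}(\alpha,\frac\pi2,q,r,s)$. (3) If $q>\frac{2n}{n-\alpha}$ or $1\le q<\frac{2n-2}{n-\alpha}$, then $\beta\mapsto\mathcal{J}(\alpha,\beta,q,r,s)$ is decreasing on $[0,\frac\pi2]$ and $\max_{\beta\in[0,\pi]}\mathcal{J}(\alpha,\beta,q,r,s)=\mathcal{J}(\alpha,0,q,r,s)$. *)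

theory Defs
  imports "HOL-Analysis.Analysis"
begin

text \<open>The integral J(alpha, beta, q, r, s) in dimension n, over [-pi, pi].
  The base 1 + s^2 - 2 r s cos theta is at least (1 - s)^2 > 0 for r, s in [0,1),
  so the real power powr is the usual one.\<close>
definition calJ :: "nat \<Rightarrow> real \<Rightarrow> real \<Rightarrow> real \<Rightarrow> real \<Rightarrow> real \<Rightarrow> real" where
  "calJ n \<alpha> \<beta> q r s =
     integral {-pi..pi}
       (\<lambda>\<theta>. (1 + s\<^sup>2 - 2 * r * s * cos \<theta>) powr ((real n - \<alpha>) * q / 2 - real n + 1)
              * \<bar>cos (\<theta> - \<beta>)\<bar> powr q)"

end

theory Submission
  imports Defs
begin

(* Write f(theta) = (A - B cos theta) powr p with A = 1 + s^2, B = 2 r s and p = (n - alpha) q / 2 - n + 1,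
   so that J(beta) is the integral of f(theta) |cos(theta - beta)| powr q.  Since |cos| powr q has period pi,
   f may be replaced by F(theta) = f(theta) + f(theta + pi) = K |cos theta|, K(c) = (A - B c) powr p + (A + B c) powr p,
   and K is decreasing on [0,1] for 0 <= p <= 1 and increasing otherwise.
   For 0 <= b1 <= b2 <= pi/2 put c = b1 + b2: the difference D(theta) of the two kernels is odd under
   theta -> c - theta, so 4 (J b1 - J b2) is the integral of D(theta) (F(c - theta) - F(theta)), and the identity
     (cos^2(theta - b2) - cos^2(theta - b1)) (cos^2(c - theta) - cos^2 theta) = sin^2(2 theta - c) sin(b2 - b1) sin c
   fixes the sign of the integrand through the monotonicity of K.  Finally J(pi - beta) = J(beta), so J takes
   on [0, pi/2] all its values on [0, pi]; the three ranges of q are p in {0,1}, 0 < p < 1, and p outside [0,1]. *)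

lemma integral_periodic_shift:
  fixes h :: "real \<Rightarrow> real"
  assumes cont: "continuous_on UNIV h" and periodic: "\<And>x. h (x + T) = h x"
    and "0 \<le> c" "c \<le> T"
  shows "integral {a..a+T} (\<lambda>x. h (x + c)) = integral {a..a+T} h"
proof -
  have int: "h integrable_on {u..v}" for u v
    by (rule integrable_continuous_interval, rule continuous_on_subset[OF cont]) simp
  note combine = Henstock_Kurzweil_Integration.integral_combine[OF _ _ int]
  have "integral {a..a+T} (\<lambda>x. h (x + c)) = integral {a+c..a+T+c} h"
    using integral_shift_Icc_real[of a "a+T" h c] by (simp add: o_def add.commute)
  also have "\<dots> = integral {a+c..a+T} h + integral {a+T..a+T+c} h"
    using combine assms by simp
  also have "integral {a+T..a+T+c} h = integral {a..a+c} (\<lambda>x. h (x + T))"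
    using integral_shift_Icc_real[of a "a+c" h T] by (simp add: o_def ac_simps)
  also have "\<dots> = integral {a..a+c} h"
    using periodic by simp
  also have "integral {a+c..a+T} h + integral {a..a+c} h = integral {a..a+T} h"
    using combine[of a "a+c" "a+T"] assms by (simp add: add.commute)
  finally show ?thesis .
qed

lemma integral_periodic_reflect:
  fixes h :: "real \<Rightarrow> real"
  assumes "continuous_on UNIV h" "\<And>x. h (x + 2*a) = h x" "0 \<le> c" "c \<le> 2*a"
  shows "integral {-a..a} (\<lambda>x. h (c - x)) = integral {-a..a} h"
proof -
  have "integral {-a..a} (\<lambda>x. h (c - x)) = integral {-a..a} (\<lambda>x. h (x + c))"
    using Henstock_Kurzweil_Integration.integral_reflect_real[of a "-a" "\<lambda>x. h (x + c)"] by simp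
  also have "\<dots> = integral {-a..a} h"
    using integral_periodic_shift[of h "2*a" c "-a"] assms by simp
  finally show ?thesis .
qed

lemma cos_squared_diff: "(cos (x::real))\<^sup>2 - (cos y)\<^sup>2 = sin (y - x) * sin (x + y)"
  unfolding sin_add sin_diff using sin_cos_squared_add[of x] sin_cos_squared_add[of y]
  by algebra

lemma cos_squared_diff_mult: "((cos (\<theta> - b2::real))\<^sup>2 - (cos (\<theta> - b1))\<^sup>2) * ((cos (b1 + b2 - \<theta>))\<^sup>2 - (cos \<theta>)\<^sup>2)
     = (sin (2*\<theta> - b1 - b2))\<^sup>2 * sin (b2 - b1) * sin (b1 + b2)"
  unfolding cos_squared_diff by (simp add: power2_eq_square algebra_simps mult_2)

lemma abs_cos_diff_mult_nonneg:
  assumes "0 \<le> b1" "b1 \<le> b2" "b2 \<le> pi/2"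
  shows "0 \<le> (\<bar>cos (\<theta> - b2)\<bar> - \<bar>cos (\<theta> - b1)\<bar>) * (\<bar>cos (b1 + b2 - \<theta>)\<bar> - \<bar>cos \<theta>\<bar>)"
proof -
  have "0 \<le> sin (b2 - b1)" "0 \<le> sin (b1 + b2)"
    using assms by (auto intro!: sin_ge_zero)
  then have "0 \<le> ((cos (\<theta> - b2))\<^sup>2 - (cos (\<theta> - b1))\<^sup>2) * ((cos (b1 + b2 - \<theta>))\<^sup>2 - (cos \<theta>)\<^sup>2)"
    unfolding cos_squared_diff_mult by simp
  then show ?thesis
    unfolding zero_le_mult_iff by (auto simp flip: abs_le_square_iff)
qed

lemma mono_on_diff_mult_nonneg:
  fixes G K :: "real \<Rightarrow> real"
  assumes "mono_on S G" "mono_on T K" "x1 \<in> S" "x2 \<in> S" "y1 \<in> T" "y2 \<in> T"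
    and "0 \<le> (x1 - x2) * (y1 - y2)"
  shows "0 \<le> (G x1 - G x2) * (K y1 - K y2)"
  using assms unfolding zero_le_mult_iff by (auto dest: monotone_onD)

lemma continuous_on_abs_cos_comp:
  fixes G :: "real \<Rightarrow> 'b::topological_space" and u :: "'a::t2_space \<Rightarrow> real"
  assumes "continuous_on {0..1} G" "continuous_on S u"
  shows "continuous_on S (\<lambda>x. G \<bar>cos (u x)\<bar>)"
  by (rule continuous_on_compose2[OF assms(1)]) (auto intro!: continuous_on_rabs continuous_on_cos assms(2))

lemma integral_add_half_period_shift:
  fixes f G :: "real \<Rightarrow> real"
  assumes f_cont: "continuous_on UNIV f" and f_periodic: "\<And>x. f (x + 2*pi) = f x"
    and G_cont: "continuous_on {0..1} G"
  shows "integral {-pi..pi} (\<lambda>\<theta>. (f \<theta> + f (\<theta> + pi)) * G \<bar>cos (\<theta> - \<beta>)\<bar>)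
           = 2 * integral {-pi..pi} (\<lambda>\<theta>. f \<theta> * G \<bar>cos (\<theta> - \<beta>)\<bar>)"
proof -
  define h where "h = (\<lambda>\<theta>. f \<theta> * G \<bar>cos (\<theta> - \<beta>)\<bar>)"
  have h_cont: "continuous_on UNIV h"
    unfolding h_def
    by (rule continuous_on_mult[OF f_cont continuous_on_abs_cos_comp[OF G_cont]]) (intro continuous_intros)
  have "h (\<theta> + pi) = f (\<theta> + pi) * G \<bar>cos (\<theta> - \<beta>)\<bar>" for \<theta>
    using cos_periodic_pi[of "\<theta> - \<beta>"] by (simp add: h_def diff_add_eq)
  then have "integral {-pi..pi} (\<lambda>\<theta>. f (\<theta> + pi) * G \<bar>cos (\<theta> - \<beta>)\<bar>)
      = integral {-pi..pi} (\<lambda>\<theta>. h (\<theta> + pi))"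
    by simp
  also have "\<dots> = integral {-pi..pi} h"
  proof -
    have "h (x + 2*pi) = h x" for x
      using cos_periodic[of "x - \<beta>"] f_periodic by (simp add: h_def diff_add_eq)
    then show ?thesis
      using integral_periodic_shift[OF h_cont, of "2*pi" pi "-pi"] by simp
  qed
  finally have "integral {-pi..pi} (\<lambda>\<theta>. f (\<theta> + pi) * G \<bar>cos (\<theta> - \<beta>)\<bar>) = integral {-pi..pi} h" .
  moreover have "(\<lambda>\<theta>. f (\<theta> + pi) * G \<bar>cos (\<theta> - \<beta>)\<bar>) integrable_on {-pi..pi}"
    by (rule integrable_continuous_interval, rule continuous_on_subset[OF continuous_on_mult[OF
          continuous_on_compose2[OF f_cont] continuous_on_abs_cos_comp[OF G_cont]]])
       (auto intro: continuous_intros)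
  moreover have "h integrable_on {-pi..pi}"
    by (rule integrable_continuous_interval, rule continuous_on_subset[OF h_cont]) simp
  ultimately show ?thesis
    unfolding distrib_right h_def by (simp add: integral_add)
qed

lemma integral_mult_reflect_antisymmetric:
  fixes D F :: "real \<Rightarrow> real"
  assumes D_cont: "continuous_on UNIV D" and F_cont: "continuous_on UNIV F"
    and D_periodic: "\<And>x. D (x + 2*pi) = D x" and F_periodic: "\<And>x. F (x + 2*pi) = F x"
    and D_antisym: "\<And>x. D (c - x) = - D x" and "0 \<le> c" "c \<le> 2*pi"
  shows "integral {-pi..pi} (\<lambda>\<theta>. D \<theta> * F (c - \<theta>)) = - integral {-pi..pi} (\<lambda>\<theta>. D \<theta> * F \<theta>)"
proof -
  define h where "h = (\<lambda>\<theta>. D (c - \<theta>) * F \<theta>)"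
  have "continuous_on UNIV h"
    unfolding h_def
    by (rule continuous_on_mult[OF continuous_on_compose2[OF D_cont] F_cont]) (auto intro: continuous_intros)
  moreover have "h (x + 2*pi) = h x" for x
  proof -
    have "D (c - (x + 2*pi)) = D (c - x)"
      using D_periodic[of "c - (x + 2*pi)"] by simp
    then show ?thesis
      unfolding h_def by (simp only: F_periodic)
  qed
  ultimately have "integral {-pi..pi} (\<lambda>\<theta>. h (c - \<theta>)) = integral {-pi..pi} h"
    using integral_periodic_reflect[of h pi c] assms(6,7) by simp
  then show ?thesis
    unfolding h_def by (simp add: D_antisym integral_neg)
qed

lemma antimono_on_integral_mult_abs_cos:
  fixes f G K :: "real \<Rightarrow> real"
  assumes f_cont: "continuous_on UNIV f" and f_periodic: "\<And>x. f (x + 2*pi) = f x"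
    and G_cont: "continuous_on {0..1} G" and G_mono: "mono_on {0..1} G"
    and f_fold: "\<And>x. f x + f (x + pi) = K \<bar>cos x\<bar>" and K_mono: "mono_on {0..1} K"
  shows "antimono_on {0..pi/2} (\<lambda>\<beta>. integral {-pi..pi} (\<lambda>\<theta>. f \<theta> * G \<bar>cos (\<theta> - \<beta>)\<bar>))"
proof (rule monotone_onI)
  fix b1 b2 assume b1: "b1 \<in> {0..pi/2}" and b2: "b2 \<in> {0..pi/2}" and "b1 \<le> b2"
  define J where "J \<beta> = integral {-pi..pi} (\<lambda>\<theta>. f \<theta> * G \<bar>cos (\<theta> - \<beta>)\<bar>)" for \<beta>
  define F where "F x = f x + f (x + pi)" for x
  define D where "D x = G (\<bar>cos (x - b2)\<bar>) - G (\<bar>cos (x - b1)\<bar>)" for x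
  define c where "c = b1 + b2"
  have D_cont: "continuous_on UNIV D"
    unfolding D_def
    by (rule continuous_on_diff; rule continuous_on_abs_cos_comp[OF G_cont]; intro continuous_intros)
  have F_cont: "continuous_on UNIV F"
    unfolding F_def
    by (rule continuous_on_add[OF f_cont continuous_on_compose2[OF f_cont]]) (auto intro: continuous_intros)
  have DF_int: "(\<lambda>\<theta>. D \<theta> * F (v \<theta>)) integrable_on {-pi..pi}" if "continuous_on UNIV v" for v
    by (rule integrable_continuous_interval, rule continuous_on_subset[OF
          continuous_on_mult[OF D_cont continuous_on_compose2[OF F_cont that]]]) auto
  have FG_int: "(\<lambda>\<theta>. F \<theta> * G \<bar>cos (\<theta> - b)\<bar>) integrable_on {-pi..pi}" for b
    by (rule integrable_continuous_interval, rule continuous_on_subset[OF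
          continuous_on_mult[OF F_cont continuous_on_abs_cos_comp[OF G_cont]]]) (auto intro: continuous_intros)
  have "integral {-pi..pi} (\<lambda>\<theta>. D \<theta> * F \<theta>)
      = integral {-pi..pi} (\<lambda>\<theta>. F \<theta> * G \<bar>cos (\<theta> - b2)\<bar>)
        - integral {-pi..pi} (\<lambda>\<theta>. F \<theta> * G \<bar>cos (\<theta> - b1)\<bar>)"
    unfolding D_def by (subst integral_diff[symmetric, OF FG_int FG_int]) (simp add: algebra_simps)
  also have "\<dots> = 2 * (J b2 - J b1)"
    unfolding F_def J_def integral_add_half_period_shift[OF f_cont f_periodic G_cont] by simp
  finally have DF: "integral {-pi..pi} (\<lambda>\<theta>. D \<theta> * F \<theta>) = 2 * (J b2 - J b1)" .
  have "integral {-pi..pi} (\<lambda>\<theta>. D \<theta> * F (c - \<theta>)) = - integral {-pi..pi} (\<lambda>\<theta>. D \<theta> * F \<theta>)"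
  proof (rule integral_mult_reflect_antisymmetric[OF D_cont F_cont])
    show "D (x + 2*pi) = D x" for x
      using cos_periodic[of "x - b1"] cos_periodic[of "x - b2"] by (simp add: D_def algebra_simps)
    have "x + 2*pi + pi = (x + pi) + 2*pi" for x
      by simp
    then show "F (x + 2*pi) = F x" for x
      by (simp only: F_def f_periodic)
    have "cos (c - x - b2) = cos (x - b1)" "cos (c - x - b1) = cos (x - b2)" for x
      using cos_minus[of "x - b1"] cos_minus[of "x - b2"] by (simp_all add: c_def)
    then show "D (c - x) = - D x" for x
      unfolding D_def by simp
    show "0 \<le> c" "c \<le> 2*pi"
      using b1 b2 by (auto simp: c_def)
  qed
  with DF have "integral {-pi..pi} (\<lambda>\<theta>. D \<theta> * (F (c - \<theta>) - F \<theta>)) = 4 * (J b1 - J b2)"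
    unfolding right_diff_distrib by (subst integral_diff) (auto intro!: DF_int continuous_intros)
  moreover have "0 \<le> integral {-pi..pi} (\<lambda>\<theta>. D \<theta> * (F (c - \<theta>) - F \<theta>))"
  proof (rule integral_nonneg)
    show "(\<lambda>\<theta>. D \<theta> * (F (c - \<theta>) - F \<theta>)) integrable_on {-pi..pi}"
      unfolding right_diff_distrib by (intro integrable_diff DF_int continuous_intros)
    show "0 \<le> D \<theta> * (F (c - \<theta>) - F \<theta>)" for \<theta>
      unfolding D_def F_def f_fold c_def
      by (rule mono_on_diff_mult_nonneg[OF G_mono K_mono])
         (use b1 b2 \<open>b1 \<le> b2\<close> abs_cos_diff_mult_nonneg in auto)
  qed
  ultimately show "J b2 \<le> J b1" by simp
qed

lemma mono_on_integral_mult_abs_cos: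
  fixes f G K :: "real \<Rightarrow> real"
  assumes "continuous_on UNIV f" "\<And>x. f (x + 2*pi) = f x"
    and "continuous_on {0..1} G" "mono_on {0..1} G"
    and "\<And>x. f x + f (x + pi) = K \<bar>cos x\<bar>" "antimono_on {0..1} K"
  shows "mono_on {0..pi/2} (\<lambda>\<beta>. integral {-pi..pi} (\<lambda>\<theta>. f \<theta> * G \<bar>cos (\<theta> - \<beta>)\<bar>))"
proof -
  have "antimono_on {0..pi/2} (\<lambda>\<beta>. integral {-pi..pi} (\<lambda>\<theta>. - f \<theta> * G \<bar>cos (\<theta> - \<beta>)\<bar>))"
  proof (rule antimono_on_integral_mult_abs_cos[where K = "\<lambda>c. - K c"])
    show "- f x + - f (x + pi) = - K \<bar>cos x\<bar>" for x
      using assms(5)[of x] by simp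
    show "mono_on {0..1} (\<lambda>c. - K c)"
      using assms(6) by (auto simp: monotone_on_def)
  qed (use assms continuous_on_minus[OF assms(1)] in auto)
  then show ?thesis
    by (auto simp: monotone_on_def integral_neg)
qed

lemma integral_mult_abs_cos_reflect:
  fixes f G :: "real \<Rightarrow> real"
  assumes "\<And>x. f (- x) = f x"
  shows "integral {-pi..pi} (\<lambda>\<theta>. f \<theta> * G \<bar>cos (\<theta> - (pi - \<beta>))\<bar>)
           = integral {-pi..pi} (\<lambda>\<theta>. f \<theta> * G \<bar>cos (\<theta> - \<beta>)\<bar>)"
proof -
  have "\<bar>cos (\<theta> - (pi - \<beta>))\<bar> = \<bar>cos (- \<theta> - \<beta>)\<bar>" for \<theta>
  proof -
    have "\<theta> - (pi - \<beta>) = (\<theta> + \<beta>) - pi" "- \<theta> - \<beta> = - (\<theta> + \<beta>)"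
      by simp_all
    then show ?thesis
      by (simp only: cos_minus cos_minus_pi abs_minus_cancel)
  qed
  then show ?thesis
    using Henstock_Kurzweil_Integration.integral_reflect_real[of pi "-pi" "\<lambda>\<theta>. f \<theta> * G \<bar>cos (\<theta> - \<beta>)\<bar>"]
    by (simp add: assms)
qed

lemma has_real_derivative_powr_sym_sum:
  fixes A B p c :: real
  assumes "0 < A - B*c" "0 < A + B*c"
  shows "((\<lambda>c. (A - B*c) powr p + (A + B*c) powr p) has_real_derivative
           p * B * ((A + B*c) powr (p-1) - (A - B*c) powr (p-1))) (at c)"
  using assms by (auto intro!: derivative_eq_intros simp: algebra_simps)

lemma monotone_on_powr_sym_sum:
  fixes A B p :: real
  assumes "0 \<le> B" "B < A"
  shows "0 \<le> p \<Longrightarrow> p \<le> 1 \<Longrightarrow> antimono_on {0..1} (\<lambda>c. (A - B*c) powr p + (A + B*c) powr p)"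
    and "p \<le> 0 \<or> 1 \<le> p \<Longrightarrow> mono_on {0..1} (\<lambda>c. (A - B*c) powr p + (A + B*c) powr p)"
proof -
  define H where "H c = (A - B*c) powr p + (A + B*c) powr p" for c
  define H' where "H' x = p * B * ((A + B*x) powr (p-1) - (A - B*x) powr (p-1))" for x
  have pos: "0 < A - B*x" "A - B*x \<le> A + B*x" if "0 \<le> x" "x \<le> 1" for x
    using that assms mult_left_le[of x B] by auto
  have deriv: "(H has_real_derivative H' x) (at x)" if "0 \<le> x" "x \<le> 1" for x
    unfolding H_def H'_def using pos[OF that] by (intro has_real_derivative_powr_sym_sum) auto
  have deriv_nonpos: "H' x \<le> 0" if "0 \<le> p" "p \<le> 1" "0 \<le> x" "x \<le> 1" for x
  proof -
    have "(A + B*x) powr (p-1) \<le> (A - B*x) powr (p-1)"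
      using pos[OF that(3,4)] that(2) by (intro powr_mono2') auto
    then show ?thesis
      unfolding H'_def using that(1) assms(1) by (simp add: mult_nonneg_nonpos)
  qed
  have deriv_nonneg: "0 \<le> H' x" if "p \<le> 0 \<or> 1 \<le> p" "0 \<le> x" "x \<le> 1" for x
    using that(1)
  proof
    assume "p \<le> 0"
    then have "(A + B*x) powr (p-1) \<le> (A - B*x) powr (p-1)"
      using pos[OF that(2,3)] by (intro powr_mono2') auto
    with \<open>p \<le> 0\<close> show ?thesis
      unfolding H'_def using assms(1) by (simp add: mult_nonpos_nonpos mult_nonpos_nonneg)
  next
    assume "1 \<le> p"
    then have "(A - B*x) powr (p-1) \<le> (A + B*x) powr (p-1)"
      using pos[OF that(2,3)] by (intro powr_mono2) auto
    with \<open>1 \<le> p\<close> show ?thesis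
      unfolding H'_def using assms(1) by simp
  qed
  show "antimono_on {0..1} H" if "0 \<le> p" "p \<le> 1"
  proof (rule monotone_onI)
    fix a b :: real assume "a \<in> {0..1}" "b \<in> {0..1}" "a \<le> b"
    show "H b \<le> H a"
    proof (rule DERIV_nonpos_imp_nonincreasing[OF \<open>a \<le> b\<close>])
      fix x assume "a \<le> x" "x \<le> b"
      with \<open>a \<in> {0..1}\<close> \<open>b \<in> {0..1}\<close> have "0 \<le> x" "x \<le> 1" by auto
      then show "\<exists>y. DERIV H x :> y \<and> y \<le> 0"
        using deriv deriv_nonpos[OF that] by blast
    qed
  qed
  show "mono_on {0..1} H" if "p \<le> 0 \<or> 1 \<le> p"
  proof (rule monotone_onI)
    fix a b :: real assume "a \<in> {0..1}" "b \<in> {0..1}" "a \<le> b"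
    show "H a \<le> H b"
    proof (rule DERIV_nonneg_imp_nondecreasing[OF \<open>a \<le> b\<close>])
      fix x assume "a \<le> x" "x \<le> b"
      with \<open>a \<in> {0..1}\<close> \<open>b \<in> {0..1}\<close> have "0 \<le> x" "x \<le> 1" by auto
      then show "\<exists>y. DERIV H x :> y \<and> 0 \<le> y"
        using deriv deriv_nonneg[OF that] by blast
    qed
  qed
qed

lemma integral_powr_cos_monotone:
  fixes A B p q :: real
  assumes "0 \<le> B" "B < A" "0 < q"
  shows "0 \<le> p \<Longrightarrow> p \<le> 1 \<Longrightarrow> mono_on {0..pi/2}
           (\<lambda>\<beta>. integral {-pi..pi} (\<lambda>\<theta>. (A - B * cos \<theta>) powr p * \<bar>cos (\<theta> - \<beta>)\<bar> powr q))"
    and "p \<le> 0 \<or> 1 \<le> p \<Longrightarrow> antimono_on {0..pi/2}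
           (\<lambda>\<beta>. integral {-pi..pi} (\<lambda>\<theta>. (A - B * cos \<theta>) powr p * \<bar>cos (\<theta> - \<beta>)\<bar> powr q))"
proof -
  define f where "f \<theta> = (A - B * cos \<theta>) powr p" for \<theta>
  define G where "G t = t powr q" for t :: real
  have "B * cos \<theta> \<le> B" for \<theta>
    using assms mult_left_le[of "cos \<theta>" B] by simp
  then have "0 < A - B * cos \<theta>" for \<theta>
    using assms(2) order_le_less_trans[of "B * cos \<theta>" B A] by simp
  then have f_cont: "continuous_on UNIV f"
    unfolding f_def by (intro continuous_intros) (auto simp: less_imp_neq[symmetric])
  have f_periodic: "f (x + 2*pi) = f x" for x
    by (simp add: f_def)
  have G_cont: "continuous_on {0..1} G"
    unfolding G_def using assms by (intro continuous_on_powr' continuous_intros) auto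
  have G_mono: "mono_on {0..1} G"
    unfolding G_def using assms by (auto intro!: monotone_onI powr_mono2)
  have f_fold: "f x + f (x + pi) = (A - B * \<bar>cos x\<bar>) powr p + (A + B * \<bar>cos x\<bar>) powr p" for x
    by (cases "0 \<le> cos x") (auto simp: f_def)
  show "mono_on {0..pi/2} (\<lambda>\<beta>. integral {-pi..pi} (\<lambda>\<theta>. f \<theta> * G \<bar>cos (\<theta> - \<beta>)\<bar>))"
    if "0 \<le> p" "p \<le> 1"
    using mono_on_integral_mult_abs_cos[OF f_cont f_periodic G_cont G_mono f_fold
        monotone_on_powr_sym_sum(1)[OF assms(1,2) that]] .
  show "antimono_on {0..pi/2} (\<lambda>\<beta>. integral {-pi..pi} (\<lambda>\<theta>. f \<theta> * G \<bar>cos (\<theta> - \<beta>)\<bar>))"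
    if "p \<le> 0 \<or> 1 \<le> p"
    using antimono_on_integral_mult_abs_cos[OF f_cont f_periodic G_cont G_mono f_fold
        monotone_on_powr_sym_sum(2)[OF assms(1,2) that]] .
qed

lemma pi_reflection_first_half:
  fixes J :: "real \<Rightarrow> real"
  assumes "\<And>\<beta>. J (pi - \<beta>) = J \<beta>" "\<beta> \<in> {0..pi}"
  obtains \<beta>' where "\<beta>' \<in> {0..pi/2}" "J \<beta> = J \<beta>'"
proof (cases "\<beta> \<le> pi/2")
  case True
  with assms(2) that show ?thesis by auto
next
  case False
  with assms that[of "pi - \<beta>"] show ?thesis by auto
qed

lemma pi_reflection_le_pi_half:
  fixes J :: "real \<Rightarrow> real"
  assumes "\<And>\<beta>. J (pi - \<beta>) = J \<beta>" "mono_on {0..pi/2} J" "\<beta> \<in> {0..pi}"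
  shows "J \<beta> \<le> J (pi/2)"
proof -
  obtain \<beta>' where "\<beta>' \<in> {0..pi/2}" "J \<beta> = J \<beta>'"
    using pi_reflection_first_half assms(1,3) .
  then show ?thesis
    using monotone_onD[OF assms(2), of \<beta>' "pi/2"] by auto
qed

lemma pi_reflection_le_zero:
  fixes J :: "real \<Rightarrow> real"
  assumes "\<And>\<beta>. J (pi - \<beta>) = J \<beta>" "antimono_on {0..pi/2} J" "\<beta> \<in> {0..pi}"
  shows "J \<beta> \<le> J 0"
proof -
  obtain \<beta>' where "\<beta>' \<in> {0..pi/2}" "J \<beta> = J \<beta>'"
    using pi_reflection_first_half assms(1,3) .
  then show ?thesis
    using monotone_onD[OF assms(2), of 0 \<beta>'] by auto
qed

lemma pi_reflection_constant:
  fixes J :: "real \<Rightarrow> real"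
  assumes "\<And>\<beta>. J (pi - \<beta>) = J \<beta>" "mono_on {0..pi/2} J" "antimono_on {0..pi/2} J"
    and "\<beta> \<in> {0..pi}"
  shows "J \<beta> = J 0"
proof -
  obtain \<beta>' where "\<beta>' \<in> {0..pi/2}" "J \<beta> = J \<beta>'"
    using pi_reflection_first_half assms(1,4) .
  then show ?thesis
    using monotone_onD[OF assms(2), of 0 \<beta>'] monotone_onD[OF assms(3), of 0 \<beta>'] by auto
qed

theorem corollary2p1:
  fixes n :: nat and \<alpha> q r s :: real
  assumes "n \<ge> 3" and "\<alpha> < 1" and "q \<ge> 1"
    and "0 \<le> r" and "r < 1" and "0 \<le> s" and "s < 1"
  shows "(q = (2 * real n - 2) / (real n - \<alpha>) \<or> q = 2 * real n / (real n - \<alpha>) \<longrightarrow>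
            (\<forall>\<beta>\<in>{0..pi}. \<forall>\<beta>'\<in>{0..pi}. calJ n \<alpha> \<beta> q r s = calJ n \<alpha> \<beta>' q r s))
       \<and> ((2 * real n - 2) / (real n - \<alpha>) < q \<and> q < 2 * real n / (real n - \<alpha>) \<longrightarrow>
            mono_on {0..pi/2} (\<lambda>\<beta>. calJ n \<alpha> \<beta> q r s)
            \<and> (\<forall>\<beta>\<in>{0..pi}. calJ n \<alpha> \<beta> q r s \<le> calJ n \<alpha> (pi/2) q r s))
       \<and> (q > 2 * real n / (real n - \<alpha>) \<or> q < (2 * real n - 2) / (real n - \<alpha>) \<longrightarrow>
            antimono_on {0..pi/2} (\<lambda>\<beta>. calJ n \<alpha> \<beta> q r s)
            \<and> (\<forall>\<beta>\<in>{0..pi}. calJ n \<alpha> \<beta> q r s \<le> calJ n \<alpha> 0 q r s))"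
proof -
  define p where "p = (real n - \<alpha>) * q / 2 - real n + 1"
  define J where "J \<beta> = calJ n \<alpha> \<beta> q r s" for \<beta>
  have "r * s \<le> s" "0 < (1 - s)\<^sup>2"
    using assms mult_left_le_one_le[of s r] by auto
  then have B_bounds: "0 \<le> 2 * r * s" "2 * r * s < 1 + s\<^sup>2"
    using assms by (auto simp: power2_eq_square algebra_simps)
  have q_pos: "0 < q"
    using assms by simp
  note J_integral = J_def calJ_def p_def[symmetric]
  have mono: "mono_on {0..pi/2} J" if "0 \<le> p" "p \<le> 1"
    unfolding J_integral by (rule integral_powr_cos_monotone(1)[OF B_bounds q_pos that])
  have anti: "antimono_on {0..pi/2} J" if "p \<le> 0 \<or> 1 \<le> p"
    unfolding J_integral by (rule integral_powr_cos_monotone(2)[OF B_bounds q_pos that])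
  have J_reflect: "J (pi - \<beta>) = J \<beta>" for \<beta>
    unfolding J_integral by (rule integral_mult_abs_cos_reflect[where G = "\<lambda>t. t powr q"]) simp
  have "0 < real n - \<alpha>"
    using assms by simp
  then have p_iff: "q = (2 * real n - 2) / (real n - \<alpha>) \<longleftrightarrow> p = 0" "q = 2 * real n / (real n - \<alpha>) \<longleftrightarrow> p = 1"
    "(2 * real n - 2) / (real n - \<alpha>) < q \<longleftrightarrow> 0 < p" "q < 2 * real n / (real n - \<alpha>) \<longleftrightarrow> p < 1"
    "q < (2 * real n - 2) / (real n - \<alpha>) \<longleftrightarrow> p < 0" "2 * real n / (real n - \<alpha>) < q \<longleftrightarrow> 1 < p"
    by (auto simp: p_def field_simps)
  show ?thesis
    unfolding J_def[symmetric] p_iff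
    using mono anti pi_reflection_constant[OF J_reflect mono anti]
      pi_reflection_le_pi_half[OF J_reflect mono] pi_reflection_le_zero[OF J_reflect anti]
    by (auto simp del: atLeastAtMost_iff)
qed

end
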